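(* An abelian group $A$ is almost divisible if and only if for every sequence $(q_n)_{n\in\mathbb{N}}$ of integers there exists $m\in\mathbb{N}$ such that for every $n>m$ we have $q_{<n}A=q_{<m}A$.
   Context: For a prime $p$, the $p$-length $l_p(A)$ of an abelian group $A$ is the smallest ordinal $\lambda$ such that $p^\lambda A$ is $p$-divisible, where $p^0A=A$, $p^{\alpha+1}A=p(p^\alpha A)$ and $p^\alpha A=\bigcap_{\beta<\alpha}p^\beta A$ for limit $\alpha$. An abelian group $A$ is called almost divisible if $l_p(A)=0$ for all but finitely many primes $p$ and $l_p(A)<\omega$ for every prime $p$. For a sequence $(q_n)_{n\in\mathbb{N}}$ of integers, $q_{<n}:=\prod_{l<n}q_l$ (so $q_{<0}=1$). *)

theory Defs
  imports "HOL-Computational_Algebra.Primes" "HOL-Library.Extended_Nat"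
begin

text \<open>Abelian groups are modelled as types of class ab_group_add (the whole type is the group).
  Integer multiples in an abelian group:\<close>

definition zmul :: "int \<Rightarrow> 'a::ab_group_add \<Rightarrow> 'a" where
  "zmul k x = (if k \<ge> 0 then ((+) x ^^ nat k) 0 else - (((+) x ^^ nat (- k)) 0))"

definition mult_set :: "int \<Rightarrow> 'a::ab_group_add set \<Rightarrow> 'a set" where
  "mult_set k B = zmul k ` B"

definition p_divisible :: "nat \<Rightarrow> 'a::ab_group_add set \<Rightarrow> bool" where
  "p_divisible p B \<longleftrightarrow> mult_set (int p) B = B"

definition p_power :: "nat \<Rightarrow> nat \<Rightarrow> 'a::ab_group_add set" where
  "p_power p n = (mult_set (int p) ^^ n) UNIV"

text \<open>p-length of the group (the whole type 'a), valued in enat: finite values are exact;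
  the value \<infinity> stands for every ordinal length \<ge> \<omega>.\<close>
definition p_length :: "nat \<Rightarrow> 'a::ab_group_add itself \<Rightarrow> enat" where
  "p_length p _ = (if \<exists>n. p_divisible p (p_power p n :: 'a set)
                    then enat (LEAST n. p_divisible p (p_power p n :: 'a set)) else \<infinity>)"

definition almost_divisible :: "'a::ab_group_add itself \<Rightarrow> bool" where
  "almost_divisible T \<longleftrightarrow>
     finite {p. prime p \<and> p_length p T \<noteq> 0} \<and> (\<forall>p. prime p \<longrightarrow> p_length p T < \<infinity>)"

end

theory Submission
  imports Defs
begin

text \<open>
  For an almost divisible \<open>A\<close> put \<open>N = \<Prod> p^l_p(A)\<close> over the finitely many primes of nonzero
  length. Then \<open>pNA = NA\<close> for every prime \<open>p\<close>, hence \<open>kNA = NA\<close> and \<open>kA = gcd(N,k)A\<close> for all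
  \<open>k \<noteq> 0\<close>; so \<open>A\<close> has only finitely many subgroups \<open>kA\<close>, and every decreasing chain \<open>q_{<n}A\<close>
  stabilizes. Conversely, the constant sequence \<open>p\<close> gives \<open>p^(n+1)A = p^nA\<close>, so \<open>l_p(A)\<close> is
  finite; and if infinitely many distinct primes \<open>p_0, p_1, \<dots>\<close> had nonzero length, taking
  \<open>q_n = p_n\<close> yields \<open>q_{<m}p_mA = q_{<m}A\<close> with \<open>p_m\<close> coprime to \<open>q_{<m}\<close>, whence \<open>p_mA = A\<close>.
\<close>

lemma antimono_finite_range_stabilizes:
  fixes f :: "nat \<Rightarrow> 'b::order"
  assumes "antimono f" and "finite (range f)"
  shows "\<exists>m. \<forall>n>m. f n = f m"
proof -
  obtain m where m: "\<And>n. f n \<le> f m \<Longrightarrow> f m = f n"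
    using finite_has_minimal[OF assms(2)] by blast
  have "f n = f m" if "n > m" for n
    using m antimonoD[OF assms(1) less_imp_le[OF that]] by metis
  then show ?thesis by blast
qed

lemma coprime_prod_of_inj_primes:
  fixes e :: "nat \<Rightarrow> 'a::factorial_semiring_gcd"
  assumes "inj e" and "\<And>l. prime (e l)"
  shows "coprime (e m) (\<Prod>l<m. e l)"
proof (rule prod_coprime_right)
  fix l
  assume "l \<in> {..<m}"
  then have "e m \<noteq> e l" using \<open>inj e\<close> by (auto dest: injD)
  then show "coprime (e m) (e l)" by (intro primes_coprime assms(2))
qed

lemma zmul_add_one: "zmul (k + 1) x = zmul k x + x"
proof (cases "k \<ge> 0")
  case True
  then have "nat (k + 1) = Suc (nat k)" by simp
  with True show ?thesis by (simp add: zmul_def add.commute)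
next
  case False
  then consider "k = -1" | "nat (- k) = Suc (nat (- (k + 1)))" "k + 1 < 0" by linarith
  then show ?thesis by cases (use False in \<open>auto simp: zmul_def\<close>)
qed

lemma zmul_0 [simp]: "zmul 0 x = 0"
  by (simp add: zmul_def)

lemma zmul_1 [simp]: "zmul 1 x = x"
  using zmul_add_one[of 0 x] by simp

lemma zmul_diff_one: "zmul (k - 1) x = zmul k x - x"
  using zmul_add_one[of "k - 1" x] by (simp add: algebra_simps)

lemma zmul_add: "zmul (a + b) x = zmul a x + zmul b x"
proof (induction b rule: int_induct[where k = 0])
  case (step1 i)
  then show ?case using zmul_add_one[of "a + i" x] by (simp add: zmul_add_one add.assoc)
next
  case (step2 i)
  then show ?case using zmul_diff_one[of "a + i" x] by (simp add: zmul_diff_one algebra_simps)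
qed simp

lemma zmul_minus: "zmul (- a) x = - zmul a x"
  using zmul_add[of a "- a" x] by (simp add: eq_neg_iff_add_eq_0 add.commute)

lemma zmul_mult: "zmul (a * b) x = zmul a (zmul b x)"
proof (induction a rule: int_induct[where k = 0])
  case (step1 i)
  then show ?case by (simp add: distrib_right zmul_add zmul_add_one)
next
  case (step2 i)
  then show ?case
    using zmul_add[of "i * b" "- b" x] by (simp add: left_diff_distrib zmul_minus zmul_diff_one)
qed simp

lemma zmul_add_right: "zmul k (x + y) = zmul k x + zmul k y"
proof (induction k rule: int_induct[where k = 0])
  case (step1 i)
  then show ?case by (simp only: zmul_add_one) (simp add: ac_simps)
next
  case (step2 i)
  then show ?case by (simp only: zmul_diff_one) (simp add: algebra_simps)
qed simp

abbreviation multiples :: "int \<Rightarrow> 'a::ab_group_add set" where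
  "multiples k \<equiv> mult_set k UNIV"

lemma mult_set_multiples: "mult_set a (multiples b) = multiples (a * b)"
  by (simp add: mult_set_def image_image zmul_mult)

lemma multiples_1 [simp]: "multiples 1 = UNIV"
  by (simp add: mult_set_def)

lemma multiples_subset_if_dvd: "d dvd k \<Longrightarrow> multiples k \<subseteq> multiples d"
  by (auto simp: mult_set_def zmul_mult elim!: dvdE)

lemma multiples_uminus: "multiples (- k) = multiples k"
  by (intro equalityI multiples_subset_if_dvd) auto

lemma multiples_gcd_subset:
  assumes "multiples a \<subseteq> (multiples b :: 'a::ab_group_add set)"
  shows "multiples (gcd a b) \<subseteq> (multiples b :: 'a set)"
proof
  fix x :: 'a
  assume "x \<in> multiples (gcd a b)"
  then obtain y where y: "x = zmul (gcd a b) y" by (auto simp: mult_set_def)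
  obtain u v where uv: "u * a + v * b = gcd a b" using bezout_int by blast
  obtain z where z: "zmul a y = zmul b z"
    using assms by (auto simp: mult_set_def)
  have "x = zmul u (zmul a y) + zmul v (zmul b y)"
    by (simp add: y uv[symmetric] zmul_add zmul_mult)
  also have "\<dots> = zmul b (zmul u z + zmul v y)"
    by (simp add: z zmul_add_right zmul_mult[symmetric] mult.commute)
  finally show "x \<in> multiples b" by (simp add: mult_set_def)
qed

lemma multiples_eq_UNIV_if_coprime:
  assumes "coprime a b" and "multiples (b * a) = (multiples b :: 'a::ab_group_add set)"
  shows "multiples a = (UNIV :: 'a set)"
proof -
  have "multiples (b * a) \<subseteq> (multiples a :: 'a set)"
    by (rule multiples_subset_if_dvd) simp
  with assms(2) have "multiples b \<subseteq> (multiples a :: 'a set)"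
    by simp
  then have "multiples (gcd b a) \<subseteq> (multiples a :: 'a set)"
    by (rule multiples_gcd_subset)
  with assms(1) show ?thesis by (simp add: coprime_iff_gcd_eq_1 gcd.commute top_unique)
qed

lemma p_power_eq_multiples: "p_power p n = multiples (int p ^ n)"
  by (induction n) (simp_all add: p_power_def mult_set_multiples)

lemma p_divisible_p_power_iff:
  "p_divisible p (p_power p n :: 'a::ab_group_add set) \<longleftrightarrow>
     multiples (int p ^ Suc n) = (multiples (int p ^ n) :: 'a set)"
  by (simp add: p_divisible_def p_power_eq_multiples mult_set_multiples)

lemma p_length_less_infinity_iff:
  "p_length p TYPE('a::ab_group_add) < \<infinity> \<longleftrightarrow>
     (\<exists>n. multiples (int p ^ Suc n) = (multiples (int p ^ n) :: 'a set))"
  by (simp add: p_length_def p_divisible_p_power_iff)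

lemma p_length_eq_0_iff:
  "p_length p TYPE('a::ab_group_add) = 0 \<longleftrightarrow> multiples (int p) = (UNIV :: 'a set)"
proof -
  have "p_length p TYPE('a) = 0 \<longleftrightarrow> p_divisible p (p_power p 0 :: 'a set)"
    unfolding p_length_def zero_enat_def
    by (auto intro: Least_eq_0) (metis LeastI)
  then show ?thesis by (simp add: p_divisible_p_power_iff)
qed

lemma multiples_mult_absorb:
  assumes "multiples (a * b) = (multiples b :: 'a::ab_group_add set)"
  shows "multiples (a * (b * c)) = (multiples (b * c) :: 'a set)"
proof -
  from assms have "mult_set c (multiples (a * b)) = (mult_set c (multiples b) :: 'a set)" by simp
  then show ?thesis by (simp add: mult_set_multiples ac_simps)
qed

lemma multiples_mult_eq_if_primes_absorbed:
  assumes "\<And>p. prime p \<Longrightarrow> multiples (int p * N) = (multiples N :: 'a::ab_group_add set)"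
  shows "k \<noteq> 0 \<Longrightarrow> multiples (k * N) = (multiples N :: 'a set)"
proof (induction k rule: prime_divisors_induct)
  case (unit u)
  then have "u = 1 \<or> u = -1" using zdvd1_eq by fastforce
  then show ?case by (auto simp: multiples_uminus)
next
  case (factor p x)
  have p: "p = int (nat p)" "prime (nat p)"
    using factor.hyps prime_ge_0_int by auto
  have "multiples (p * x * N) = mult_set p (multiples (x * N) :: 'a set)"
    by (simp add: mult_set_multiples mult.assoc)
  also have "\<dots> = mult_set p (multiples N)"
    using factor by simp
  also have "\<dots> = multiples N"
    using assms[OF p(2)] p(1) by (simp add: mult_set_multiples)
  finally show ?case .
qed simp

lemma multiples_eq_multiples_gcd:
  assumes "\<And>k. k \<noteq> 0 \<Longrightarrow> multiples (k * N) = (multiples N :: 'a::ab_group_add set)"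
    and "k \<noteq> 0"
  shows "multiples k = (multiples (gcd N k) :: 'a set)"
proof
  have "multiples N = (multiples (k * N) :: 'a set)" using assms(1)[OF assms(2)] by simp
  also have "\<dots> \<subseteq> multiples k" by (rule multiples_subset_if_dvd) simp
  finally show "multiples (gcd N k) \<subseteq> (multiples k :: 'a set)" by (rule multiples_gcd_subset)
  show "multiples k \<subseteq> (multiples (gcd N k) :: 'a set)" by (rule multiples_subset_if_dvd) simp
qed

lemma finite_range_multiples_if_primes_absorbed:
  assumes "N > 0" and "\<And>p. prime p \<Longrightarrow> multiples (int p * N) = (multiples N :: 'a::ab_group_add set)"
  shows "finite (range (multiples :: int \<Rightarrow> 'a set))"
proof (rule finite_subset)
  have "multiples k \<in> (multiples ` {0..N} :: 'a set set)" if "k \<noteq> 0" for k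
  proof (rule image_eqI)
    show "multiples k = (multiples (gcd N k) :: 'a set)"
      using multiples_eq_multiples_gcd[OF multiples_mult_eq_if_primes_absorbed[OF assms(2)] that] .
    show "gcd N k \<in> {0..N}" using \<open>N > 0\<close> by (simp add: zdvd_imp_le)
  qed
  then show "range multiples \<subseteq> insert (multiples 0) (multiples ` {0..N} :: 'a set set)"
    by (intro image_subsetI) (metis insertCI)
qed simp

lemma finite_range_multiples_if_almost_divisible:
  assumes "almost_divisible TYPE('a::ab_group_add)"
  shows "finite (range (multiples :: int \<Rightarrow> 'a set))"
proof -
  define S where "S = {p. prime p \<and> p_length p TYPE('a) \<noteq> 0}"
  have "\<exists>n. multiples (int p * int p ^ n) = (multiples (int p ^ n) :: 'a set) \<and> (p \<notin> S \<longrightarrow> n = 0)"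
    if "prime p" for p
  proof (cases "p \<in> S")
    case True
    with assms that show ?thesis
      unfolding almost_divisible_def p_length_less_infinity_iff by auto
  next
    case False
    with that show ?thesis by (auto simp: S_def p_length_eq_0_iff)
  qed
  then obtain e where e: "\<And>p. prime p \<Longrightarrow> multiples (int p * int p ^ e p) = (multiples (int p ^ e p) :: 'a set)"
    and e_0: "\<And>p. prime p \<Longrightarrow> p \<notin> S \<Longrightarrow> e p = 0"
    by metis
  define N where "N = (\<Prod>p\<in>S. int p ^ e p)"
  have "finite S" using assms by (simp add: almost_divisible_def S_def)
  have "N > 0" unfolding N_def by (rule prod_pos) (auto simp: S_def prime_gt_0_nat)
  moreover have "multiples (int p * N) = (multiples N :: 'a set)" if "prime p" for p
  proof -
    obtain R where "N = int p ^ e p * R"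
    proof (cases "p \<in> S")
      case True
      then show ?thesis using that prod.remove[OF \<open>finite S\<close> True] unfolding N_def by blast
    next
      case False
      then show ?thesis using that e_0[OF \<open>prime p\<close>] by simp
    qed
    then show ?thesis using multiples_mult_absorb[OF e[OF \<open>prime p\<close>]] by simp
  qed
  ultimately show ?thesis by (rule finite_range_multiples_if_primes_absorbed)
qed

lemma multiples_prod_stabilizes_if_almost_divisible:
  fixes q :: "nat \<Rightarrow> int"
  assumes "almost_divisible TYPE('a::ab_group_add)"
  shows "\<exists>m. \<forall>n>m. multiples (\<Prod>l<n. q l) = (multiples (\<Prod>l<m. q l) :: 'a set)"
proof -
  have "finite (range (\<lambda>n. multiples (\<Prod>l<n. q l) :: 'a set))"
    using finite_range_multiples_if_almost_divisible[OF assms]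
    by (rule finite_subset[rotated]) (intro image_subsetI rangeI)
  moreover have "antimono (\<lambda>n. multiples (\<Prod>l<n. q l) :: 'a set)"
    by (intro antimonoI multiples_subset_if_dvd prod_dvd_prod_subset) auto
  ultimately show ?thesis
    by (intro antimono_finite_range_stabilizes)
qed

lemma p_length_less_infinity_if_stabilizes:
  assumes "\<forall>n>m. multiples (int p ^ n) = (multiples (int p ^ m) :: 'a::ab_group_add set)"
  shows "p_length p TYPE('a) < \<infinity>"
  using assms p_length_less_infinity_iff[where 'a = 'a] by blast

lemma finite_nonzero_p_length_if_stabilizes:
  assumes "\<And>q :: nat \<Rightarrow> int. \<exists>m. \<forall>n>m. multiples (\<Prod>l<n. q l) = (multiples (\<Prod>l<m. q l) :: 'a::ab_group_add set)"
  shows "finite {p. prime p \<and> p_length p TYPE('a) \<noteq> 0}" (is "finite ?S")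
proof (rule ccontr)
  assume "infinite ?S"
  then obtain e :: "nat \<Rightarrow> nat" where "inj e" and e: "range e \<subseteq> ?S"
    unfolding infinite_iff_countable_subset by blast
  obtain m where m: "\<forall>n>m. multiples (\<Prod>l<n. int (e l)) = (multiples (\<Prod>l<m. int (e l)) :: 'a set)"
    using assms by blast
  have "prime (e m)" and length: "p_length (e m) TYPE('a) \<noteq> 0" using e by auto
  have "inj (\<lambda>l. int (e l))" using \<open>inj e\<close> by (simp add: inj_def)
  then have "coprime (int (e m)) (\<Prod>l<m. int (e l))"
    by (rule coprime_prod_of_inj_primes) (use e in auto)
  moreover have "multiples ((\<Prod>l<m. int (e l)) * int (e m)) = (multiples (\<Prod>l<m. int (e l)) :: 'a set)"
    using m[rule_format, of "Suc m"] by simp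
  ultimately have "multiples (int (e m)) = (UNIV :: 'a set)"
    by (rule multiples_eq_UNIV_if_coprime)
  with length show False by (simp add: p_length_eq_0_iff)
qed

theorem mainTheorem2:
  shows "almost_divisible TYPE('a::ab_group_add) \<longleftrightarrow>
    (\<forall>q :: nat \<Rightarrow> int. \<exists>m::nat. \<forall>n>m.
        mult_set (\<Prod>l<n. q l) (UNIV :: 'a set) = mult_set (\<Prod>l<m. q l) UNIV)"
proof
  assume "almost_divisible TYPE('a)"
  then show "\<forall>q :: nat \<Rightarrow> int. \<exists>m. \<forall>n>m. multiples (\<Prod>l<n. q l) = (multiples (\<Prod>l<m. q l) :: 'a set)"
    by (intro allI multiples_prod_stabilizes_if_almost_divisible)
next
  assume stable: "\<forall>q :: nat \<Rightarrow> int. \<exists>m. \<forall>n>m. multiples (\<Prod>l<n. q l) = (multiples (\<Prod>l<m. q l) :: 'a set)"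
  have "p_length p TYPE('a) < \<infinity>" for p
    using stable[rule_format, of "\<lambda>_. int p"] p_length_less_infinity_if_stabilizes by auto
  moreover have "finite {p. prime p \<and> p_length p TYPE('a) \<noteq> 0}"
    using stable by (intro finite_nonzero_p_length_if_stabilizes) simp
  ultimately show "almost_divisible TYPE('a)"
    by (simp add: almost_divisible_def)
qed

end
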